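(* Let $v\equiv 3$ or $15\pmod{18}$ with $v>3$, and let $S=(\mathbb{Z}_v,\mathcal{B})$ be a cyclic $\mathrm{STS}(v)$ (with cyclic automorphism $i\mapsto i+1\bmod v$). Then $S$ admits a zero-sum $4$-flow. Moreover, if $S$ has a full orbit of Type $1$ or of Type $3$, then $S$ admits a zero-sum $3$-flow.
   Context: A Steiner triple system $\mathrm{STS}(v)$ is a pair $(X,\mathcal{B})$ with $|X|=v$ and $\mathcal{B}$ a collection of 3-subsets of $X$ such that every 2-subset lies in exactly one block. It is cyclic if (after relabeling) $X=\mathbb{Z}_v$ and $\alpha:i\mapsto i+1\pmod v$ maps blocks to blocks. Blocks are partitioned into orbits under $\langle\alpha\rangle$; an orbit of size $v$ is a full orbit, and for $v\equiv3\pmod6$ there is exactly one other (short) orbit, that of $\{0,v/3,2v/3\}$. When $3\mid v$, an orbit is of Type $i$ ($i=1,2,3$) if each of its blocks contains elements of exactly $i$ distinct residue classes mod $3$. For integer $n\ge2$, a zero-sum $n$-flow is a map $f:\mathcal{B}\to\{\pm1,\ldots,\pm(n-1)\}$ with $\sum_{B\ni x} f(B)=0$ for every point $x$. *)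

theory Defs
  imports Main
begin

definition is_STS :: "nat \<Rightarrow> nat set set \<Rightarrow> bool" where
  "is_STS v B \<longleftrightarrow>
     (\<forall>b\<in>B. b \<subseteq> {..<v} \<and> card b = 3) \<and>
     (\<forall>x\<in>{..<v}. \<forall>y\<in>{..<v}. x \<noteq> y \<longrightarrow> (\<exists>!b. b \<in> B \<and> {x, y} \<subseteq> b))"

definition shift :: "nat \<Rightarrow> nat \<Rightarrow> nat \<Rightarrow> nat" where
  "shift v k i = (i + k) mod v"

definition is_cyclic_STS :: "nat \<Rightarrow> nat set set \<Rightarrow> bool" where
  "is_cyclic_STS v B \<longleftrightarrow> is_STS v B \<and> (\<forall>b\<in>B. shift v 1 ` b \<in> B)"

definition block_orbit :: "nat \<Rightarrow> nat set \<Rightarrow> nat set set" where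
  "block_orbit v b = {shift v k ` b | k. k < v}"

definition full_orbit :: "nat \<Rightarrow> nat set set \<Rightarrow> nat set set \<Rightarrow> bool" where
  "full_orbit v B Orb \<longleftrightarrow> (\<exists>b\<in>B. Orb = block_orbit v b) \<and> card Orb = v"

definition orbit_of_type :: "nat \<Rightarrow> nat set set \<Rightarrow> bool" where
  "orbit_of_type i Orb \<longleftrightarrow> (\<forall>b\<in>Orb. card ((\<lambda>x. x mod 3) ` b) = i)"

definition zero_sum_flow :: "nat \<Rightarrow> nat \<Rightarrow> nat set set \<Rightarrow> (nat set \<Rightarrow> int) \<Rightarrow> bool" where
  "zero_sum_flow n v B f \<longleftrightarrow>
     (\<forall>b\<in>B. f b \<noteq> 0 \<and> \<bar>f b\<bar> \<le> int n - 1) \<and>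
     (\<forall>x\<in>{..<v}. (\<Sum>b\<in>{b\<in>B. x \<in> b}. f b) = 0)"

definition admits_zero_sum_flow :: "nat \<Rightarrow> nat \<Rightarrow> nat set set \<Rightarrow> bool" where
  "admits_zero_sum_flow n v B \<longleftrightarrow> (\<exists>f. zero_sum_flow n v B f)"

end

theory Submission
  imports Defs
begin

text \<open>
  Give every difference d \<in> {1..(v-1)/2} of Z_v a weight E d and every block the sum of the weights
  of its three differences. By cyclicity all points then carry the same total, three times the sum
  of all weights. In a full orbit the three differences of a block are distinct (otherwise a
  nontrivial shift fixes the block, which makes it short), so weighting only the smallest difference
  of each full orbit puts that weight on all its blocks. With weights \<plusminus>1 alternating along
  the orbits their sum is 0 or 1, and the remainder is absorbed by the short orbit, whose blocks
  cover every point exactly once: weight 3 there and a corrected weight on the orbit through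
  {0, 1} give a 4-flow. For a 3-flow one full orbit of Type 3 is weighted instead by the residue mod
  3 of the shift producing each block, since every point lies in blocks of that orbit shifted by all
  three residues. A full orbit of Type 1 forces a full orbit of Type 3: double counting pairs of
  points in the same residue class shows that there are v/3 more Type-3 blocks than twice the
  number of Type-1 blocks, while the short orbit has only v/3 blocks.
\<close>


section \<open>Differences and shifts modulo v\<close>

definition diff_mod :: "nat \<Rightarrow> nat \<Rightarrow> nat \<Rightarrow> nat" where
  "diff_mod v u w = (w + v - u) mod v"

definition dist_mod :: "nat \<Rightarrow> nat \<Rightarrow> nat \<Rightarrow> nat" where
  "dist_mod v u w = min (diff_mod v u w) (diff_mod v w u)"

lemma add_mod_left_cancel: "(a + b) mod v = (a + c) mod v \<Longrightarrow> b mod (v::nat) = c mod v"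
  by (simp add: nat_mod_eq_iff add.assoc)

lemma add_mod_eq_self_iff: "x < (v::nat) \<Longrightarrow> (x + j) mod v = x \<longleftrightarrow> j mod v = 0"
proof -
  assume "x < v"
  then have "(x + j) mod v = x \<longleftrightarrow> (x + j) mod v = (x + 0) mod v" by simp
  also have "\<dots> \<longleftrightarrow> j mod v = 0 mod v" using add_mod_left_cancel mod_add_cong by blast
  finally show ?thesis by simp
qed

lemma mult_eq_mult_bounds:
  fixes d v n q :: nat
  assumes "0 < d" "d < v" "0 < n" "n * d = v * q"
  shows "0 < q \<and> q < n"
proof -
  have "0 < v * q" using assms(1,3,4) by (metis nat_0_less_mult_iff)
  moreover have "n * d < n * v" using assms(2,3) by simp
  then have "v * q < v * n" using assms(4) by (metis mult.commute)
  ultimately show ?thesis by (metis mult_less_cancel1 nat_0_less_mult_iff)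
qed

lemma diff_mod_eq: "u < v \<Longrightarrow> w < v \<Longrightarrow> diff_mod v u w = (if u \<le> w then w - u else w + v - u)"
  unfolding diff_mod_def by (cases "u \<le> w") (simp_all add: le_mod_geq)

lemma diff_mod_less: "0 < v \<Longrightarrow> diff_mod v u w < v"
  by (simp add: diff_mod_def)

lemma add_diff_mod: "u < v \<Longrightarrow> w < v \<Longrightarrow> (u + diff_mod v u w) mod v = w"
  by (simp add: diff_mod_def mod_add_right_eq)

lemma diff_mod_unique: "u < v \<Longrightarrow> d < v \<Longrightarrow> (u + d) mod v = w \<Longrightarrow> diff_mod v u w = d"
proof -
  assume a: "u < v" "d < v" "(u + d) mod v = w"
  then have "w < v" using mod_less_divisor[of v "u + d"] by linarith
  then have "(u + diff_mod v u w) mod v = (u + d) mod v" using a add_diff_mod by simp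
  then have "diff_mod v u w mod v = d mod v" by (rule add_mod_left_cancel)
  then show ?thesis using a diff_mod_less[of v u w] by simp
qed

lemma diff_mod_eq_0_iff: "u < v \<Longrightarrow> w < v \<Longrightarrow> diff_mod v u w = 0 \<longleftrightarrow> u = w"
  using add_diff_mod[of u v w] by (auto simp: diff_mod_def)

lemma diff_mod_add_swap: "u < v \<Longrightarrow> w < v \<Longrightarrow> u \<noteq> w \<Longrightarrow> diff_mod v u w + diff_mod v w u = v"
  by (simp add: diff_mod_eq)

lemma diff_mod_mod_3_eq_iff:
  assumes "3 dvd v" "p < v" "q < v" "x < v"
  shows "diff_mod v p x mod 3 = diff_mod v q x mod 3 \<longleftrightarrow> p mod 3 = q mod 3"
proof -
  have to_x: "(u + diff_mod v u x) mod 3 = x mod 3" if "u < v" for u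
    using add_diff_mod[OF that assms(4)] assms(1) by (metis mod_mod_cancel)
  show ?thesis
  proof
    assume "diff_mod v p x mod 3 = diff_mod v q x mod 3"
    then have "(diff_mod v p x + p) mod 3 = (diff_mod v p x + q) mod 3"
      using to_x[OF assms(2)] to_x[OF assms(3)] by (metis add.commute mod_add_right_eq)
    then show "p mod 3 = q mod 3" by (rule add_mod_left_cancel)
  next
    assume "p mod 3 = q mod 3"
    then have "(p + diff_mod v p x) mod 3 = (p + diff_mod v q x) mod 3"
      using to_x[OF assms(2)] to_x[OF assms(3)] by (metis mod_add_left_eq)
    then show "diff_mod v p x mod 3 = diff_mod v q x mod 3" by (rule add_mod_left_cancel)
  qed
qed

lemma diff_mod_mod_3_eq_0_iff:
  "3 dvd v \<Longrightarrow> u < v \<Longrightarrow> w < v \<Longrightarrow> diff_mod v u w mod 3 = 0 \<longleftrightarrow> u mod 3 = w mod 3"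
  using diff_mod_mod_3_eq_iff[of v u w w] diff_mod_eq_0_iff[of w v w] by simp

lemma dist_mod_commute: "dist_mod v u w = dist_mod v w u"
  by (simp add: dist_mod_def min.commute)

lemma dist_mod_bounds:
  assumes "odd v" "u < v" "w < v" "u \<noteq> w"
  shows "1 \<le> dist_mod v u w \<and> dist_mod v u w \<le> v div 2"
proof -
  have "v = 2 * (v div 2) + 1" using \<open>odd v\<close> by presburger
  then show ?thesis
    using assms diff_mod_add_swap[of u v w] diff_mod_eq_0_iff[of u v w] diff_mod_eq_0_iff[of w v u]
    by (auto simp: dist_mod_def)
qed

lemma shift_shift: "shift v j (shift v k y) = shift v (k + j) y"
  by (simp add: shift_def mod_add_left_eq add.assoc)

lemma shift_less: "0 < v \<Longrightarrow> shift v k y < v"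
  by (simp add: shift_def)

lemma shift_inj: "x < v \<Longrightarrow> y < v \<Longrightarrow> shift v k x = shift v k y \<Longrightarrow> x = y"
  using add_mod_left_cancel[of k x v y] by (simp add: shift_def add.commute)

lemma shift_eq_self_iff: "x < v \<Longrightarrow> shift v j x = x \<longleftrightarrow> j mod v = 0"
  by (simp add: shift_def add_mod_eq_self_iff)

lemma shift_diff_mod_pair:
  assumes "p < v" "q < v" "p' < v" "q' < v" "diff_mod v p q = diff_mod v p' q'"
  shows "shift v (diff_mod v p p') p = p' \<and> shift v (diff_mod v p p') q = q'"
proof
  show p: "shift v (diff_mod v p p') p = p'" using assms by (simp add: shift_def add_diff_mod)
  have q: "q = shift v (diff_mod v p q) p" using add_diff_mod[of p v q] assms(1,2) by (simp add: shift_def)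
  have "shift v (diff_mod v p p') q = shift v (diff_mod v p q) (shift v (diff_mod v p p') p)"
    by (subst q) (simp add: shift_shift add.commute)
  also have "\<dots> = q'" using assms p by (simp add: shift_def add_diff_mod)
  finally show "shift v (diff_mod v p p') q = q'" .
qed

lemma shift_hits_point_iff:
  assumes "p < v" "x < v" "k < v"
  shows "shift v k p = x \<longleftrightarrow> k = diff_mod v p x"
  using assms add_diff_mod[of p v x] diff_mod_unique[of p v k x] by (auto simp: shift_def)

lemma shifts_hitting_point:
  assumes b: "b \<subseteq> {..<v}" and x: "x < v"
  shows "{k\<in>{..<v}. x \<in> shift v k ` b} = (\<lambda>p. diff_mod v p x) ` b"
proof (intro equalityI subsetI)
  fix k assume "k \<in> {k\<in>{..<v}. x \<in> shift v k ` b}"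
  then obtain p where "p \<in> b" "shift v k p = x" "k < v" by auto
  then show "k \<in> (\<lambda>p. diff_mod v p x) ` b" using shift_hits_point_iff b x by blast
next
  fix k assume "k \<in> (\<lambda>p. diff_mod v p x) ` b"
  then obtain p where p: "p \<in> b" "k = diff_mod v p x" by blast
  then have "k < v" "shift v k p = x" using shift_hits_point_iff b x diff_mod_less by auto
  then show "k \<in> {k\<in>{..<v}. x \<in> shift v k ` b}" using p(1) by auto
qed

lemma inj_on_diff_mod_point:
  assumes b: "b \<subseteq> {..<v}" and x: "x < v"
  shows "inj_on (\<lambda>p. diff_mod v p x) b"
proof (rule inj_onI)
  fix p q assume pq: "p \<in> b" "q \<in> b" "diff_mod v p x = diff_mod v q x"
  then have "p < v" "q < v" using b by auto
  then have "shift v (diff_mod v p x) p = x" "shift v (diff_mod v q x) q = x"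
    using add_diff_mod x by (simp_all add: shift_def)
  then have "shift v (diff_mod v p x) p = shift v (diff_mod v p x) q" using pq(3) by simp
  then show "p = q" using shift_inj \<open>p < v\<close> \<open>q < v\<close> by blast
qed

lemma image_shift_shift: "shift v j ` shift v k ` b = shift v (k + j) ` b"
  by (simp add: image_image shift_shift)

lemma image_shift_mod: "shift v k ` b = shift v (k mod v) ` b"
  by (simp add: shift_def mod_add_right_eq)

lemma image_shift_mult: "b \<subseteq> {..<v} \<Longrightarrow> shift v (v * q) ` b = b"
  by (force simp: shift_def image_iff subset_iff)

lemma image_shift_back:
  assumes b: "b \<subseteq> {..<v}"
  shows "shift v (v - k mod v) ` shift v k ` b = b"
proof (cases "v = 0")
  case True
  then show ?thesis using b by simp
next
  case False
  have "k mod v < v" "v * (k div v) + k mod v = k" using False by (simp_all add: mult_div_mod_eq)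
  then have "k + (v - k mod v) = v * (k div v) + v" by linarith
  then have "k + (v - k mod v) = v * (k div v + 1)" by simp
  then have "shift v (v - k mod v) ` shift v k ` b = shift v (v * (k div v + 1)) ` b"
    by (simp only: image_shift_shift)
  then show ?thesis using image_shift_mult[OF b, of "k div v + 1"] by (simp only:)
qed

lemma diff_mod_shift: "u < v \<Longrightarrow> w < v \<Longrightarrow> diff_mod v (shift v k u) (shift v k w) = diff_mod v u w"
proof -
  assume a: "u < v" "w < v"
  have "(shift v k u + diff_mod v u w) mod v = ((u + diff_mod v u w) mod v + k) mod v"
    by (simp add: shift_def mod_simps add_ac)
  also have "\<dots> = shift v k w" using a by (simp add: add_diff_mod shift_def)
  finally show ?thesis using a by (intro diff_mod_unique) (auto simp: shift_less diff_mod_less)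
qed

lemma dist_mod_shift: "u < v \<Longrightarrow> w < v \<Longrightarrow> dist_mod v (shift v k u) (shift v k w) = dist_mod v u w"
  by (simp add: dist_mod_def diff_mod_shift)

section \<open>Weighting blocks by their differences\<close>

definition off_diag :: "'a set \<Rightarrow> ('a \<times> 'a) set" where
  "off_diag A = {p \<in> A \<times> A. fst p \<noteq> snd p}"

lemma sum_off_diag_triple:
  fixes \<phi> :: "'a \<times> 'a \<Rightarrow> int"
  assumes "x \<noteq> y" "y \<noteq> z" "x \<noteq> z"
  shows "(\<Sum>p\<in>off_diag {x, y, z}. \<phi> p) = \<phi> (x, y) + \<phi> (y, x) + \<phi> (x, z) + \<phi> (z, x) + \<phi> (y, z) + \<phi> (z, y)"
proof -
  have "off_diag {x, y, z} = {(x, y), (y, x), (x, z), (z, x), (y, z), (z, y)}"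
    using assms by (auto simp: off_diag_def)
  then show ?thesis using assms by (simp add: add.assoc)
qed

lemma off_diag_image: "inj_on f A \<Longrightarrow> off_diag (f ` A) = map_prod f f ` off_diag A"
  by (auto simp: off_diag_def inj_on_eq_iff)

lemma sum_off_diag_diff_mod:
  fixes \<psi> :: "nat \<Rightarrow> int"
  assumes "0 < v"
  shows "(\<Sum>p\<in>off_diag {..<v}. \<psi> (diff_mod v (fst p) (snd p))) = int v * (\<Sum>d\<in>{1..<v}. \<psi> d)"
proof -
  have "off_diag {..<v} = Sigma {..<v} (\<lambda>u. {..<v} - {u})" by (auto simp: off_diag_def)
  then have "(\<Sum>p\<in>off_diag {..<v}. \<psi> (diff_mod v (fst p) (snd p))) =
      (\<Sum>u<v. \<Sum>w\<in>{..<v} - {u}. \<psi> (diff_mod v u w))"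
    by (simp add: sum.Sigma split_def)
  also have "\<dots> = (\<Sum>u<v. \<Sum>d\<in>{1..<v}. \<psi> d)"
  proof (rule sum.cong[OF refl])
    fix u assume u: "u \<in> {..<v}"
    show "(\<Sum>w\<in>{..<v} - {u}. \<psi> (diff_mod v u w)) = (\<Sum>d\<in>{1..<v}. \<psi> d)"
    proof (rule sum.reindex_bij_witness[where i="\<lambda>d. (u + d) mod v" and j="diff_mod v u"])
      fix w assume "w \<in> {..<v} - {u}"
      then show "(u + diff_mod v u w) mod v = w" "diff_mod v u w \<in> {1..<v}"
        using u assms add_diff_mod diff_mod_less diff_mod_eq_0_iff[of u v w] by auto
    next
      fix d assume "d \<in> {1..<v}"
      then show "diff_mod v u ((u + d) mod v) = d" "(u + d) mod v \<in> {..<v} - {u}"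
        using u assms add_mod_eq_self_iff[of u v d] by (auto intro: diff_mod_unique)
    qed simp
  qed
  finally show ?thesis by simp
qed

text \<open>
  An ordered pair (u, w) carries the weight of its forward difference only if that is the shorter
  way round the cycle; for odd v exactly one of (u, w) and (w, u) does, so each unordered pair of a
  block is weighted once, by its distance. Ordered pairs make totals over all of Z_v computable by
  reindexing with the difference.
\<close>
definition directed_weight :: "nat \<Rightarrow> (nat \<Rightarrow> int) \<Rightarrow> nat \<Rightarrow> nat \<Rightarrow> int" where
  "directed_weight v E u w = (if diff_mod v u w \<le> v div 2 then E (diff_mod v u w) else 0)"

definition block_weight :: "nat \<Rightarrow> (nat \<Rightarrow> int) \<Rightarrow> nat set \<Rightarrow> int" where
  "block_weight v E b = (\<Sum>p\<in>off_diag b. directed_weight v E (fst p) (snd p))"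

lemma directed_weight_swap:
  assumes "odd v" "u < v" "w < v" "u \<noteq> w"
  shows "directed_weight v E u w + directed_weight v E w u = E (dist_mod v u w)"
proof -
  have "v = 2 * (v div 2) + 1" using \<open>odd v\<close> by presburger
  then have "diff_mod v u w \<le> v div 2 \<longleftrightarrow> \<not> diff_mod v w u \<le> v div 2"
    using assms diff_mod_add_swap[of u v w] by linarith
  then show ?thesis by (auto simp: directed_weight_def dist_mod_def)
qed

lemma block_weight_triple:
  assumes "odd v" "x < v" "y < v" "z < v" "x \<noteq> y" "y \<noteq> z" "x \<noteq> z"
  shows "block_weight v E {x, y, z} = E (dist_mod v x y) + E (dist_mod v x z) + E (dist_mod v y z)"
  using assms by (simp add: block_weight_def sum_off_diag_triple directed_weight_swap[symmetric])

lemma block_weight_shift: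
  assumes "b \<subseteq> {..<v}"
  shows "block_weight v E (shift v k ` b) = block_weight v E b"
proof -
  have inj: "inj_on (shift v k) b" using assms shift_inj by (meson inj_onI lessThan_iff subsetD)
  have "inj_on (map_prod (shift v k) (shift v k)) (b \<times> b)" using map_prod_inj_on[OF inj inj] .
  then have "inj_on (map_prod (shift v k) (shift v k)) (off_diag b)"
    by (rule inj_on_subset) (auto simp: off_diag_def)
  then have "block_weight v E (shift v k ` b) =
      (\<Sum>p\<in>off_diag b. directed_weight v E (shift v k (fst p)) (shift v k (snd p)))"
    by (simp add: block_weight_def off_diag_image[OF inj] sum.reindex)
  also have "\<dots> = block_weight v E b"
    using assms unfolding block_weight_def directed_weight_def off_diag_def
    by (intro sum.cong refl) (auto simp: diff_mod_shift subset_iff)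
  finally show ?thesis .
qed

section \<open>Cyclic Steiner triple systems\<close>

locale cyclic_sts =
  fixes v :: nat and B :: "nat set set"
  assumes cyclic: "is_cyclic_STS v B" and v_mod_6: "v mod 6 = 3"
begin

lemma v_pos: "0 < v"
  using v_mod_6 by presburger

lemma odd_v: "odd v"
  using v_mod_6 by presburger

lemma v_eq_3_mult: "v = 3 * (v div 3)"
  using v_mod_6 by presburger

lemma three_dvd_v: "3 dvd v"
  using v_mod_6 by presburger

lemma block_subset: "b \<in> B \<Longrightarrow> b \<subseteq> {..<v}"
  using cyclic by (simp add: is_cyclic_STS_def is_STS_def)

lemma card_block: "b \<in> B \<Longrightarrow> card b = 3"
  using cyclic by (simp add: is_cyclic_STS_def is_STS_def)

lemma finite_blocks: "finite B"
  using block_subset by (auto intro: finite_subset[of B "Pow {..<v}"])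

lemma block_triple:
  assumes "b \<in> B"
  obtains x y z where "b = {x, y, z}" "x \<noteq> y" "y \<noteq> z" "x \<noteq> z" "x < v" "y < v" "z < v"
  using card_block[OF assms] block_subset[OF assms] by (auto simp: card_3_iff)

lemma ex1_block: "x < v \<Longrightarrow> y < v \<Longrightarrow> x \<noteq> y \<Longrightarrow> \<exists>!b. b \<in> B \<and> x \<in> b \<and> y \<in> b"
  using cyclic by (simp add: is_cyclic_STS_def is_STS_def)

lemma block_unique:
  "b \<in> B \<Longrightarrow> b' \<in> B \<Longrightarrow> x \<in> b \<Longrightarrow> y \<in> b \<Longrightarrow> x \<in> b' \<Longrightarrow> y \<in> b' \<Longrightarrow> x \<noteq> y \<Longrightarrow> b = b'"
  using ex1_block[of x y] block_subset[of b] by auto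

lemma shift_block: "b \<in> B \<Longrightarrow> shift v k ` b \<in> B"
proof (induction k)
  case 0
  then show ?case using image_shift_mult[OF block_subset, of b 0] by simp
next
  case (Suc k)
  then have "shift v 1 ` shift v k ` b \<in> B" using cyclic by (simp add: is_cyclic_STS_def)
  then show ?case by (simp add: image_shift_shift)
qed

lemma point_sum_eq_total:
  fixes g :: "nat set \<Rightarrow> int"
  assumes inv: "\<And>b k. b \<in> B \<Longrightarrow> g (shift v k ` b) = g b" and x: "x < v"
  shows "int v * (\<Sum>b\<in>{b\<in>B. x \<in> b}. g b) = 3 * (\<Sum>b\<in>B. g b)"
proof -
  have translate: "(\<Sum>b\<in>{b\<in>B. y \<in> b}. g b) = (\<Sum>b\<in>{b\<in>B. 0 \<in> b}. g b)" if y: "y < v" for y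
  proof (rule sum.reindex_bij_witness[where i="\<lambda>b. shift v y ` b" and j="\<lambda>b. shift v (v - y) ` b"])
    fix b assume b: "b \<in> {b\<in>B. y \<in> b}"
    have "shift v (v - y) y = 0" using y by (simp add: shift_def)
    then show "shift v (v - y) ` b \<in> {b\<in>B. 0 \<in> b}" using b shift_block by force
    show "shift v y ` shift v (v - y) ` b = b" "g (shift v (v - y) ` b) = g b"
      using b y inv image_shift_mult[OF block_subset, of b 1] by (simp_all add: image_shift_shift)
  next
    fix b assume b: "b \<in> {b\<in>B. 0 \<in> b}"
    show "shift v (v - y) ` shift v y ` b = b"
      using b y image_shift_mult[OF block_subset, of b 1] by (simp add: image_shift_shift)
    show "shift v y ` b \<in> {b\<in>B. y \<in> b}" using b y shift_block by (force simp: shift_def)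
  qed
  have "int v * (\<Sum>b\<in>{b\<in>B. x \<in> b}. g b) = (\<Sum>y<v. \<Sum>b\<in>{b\<in>B. x \<in> b}. g b)"
    by simp
  also have "\<dots> = (\<Sum>y<v. \<Sum>b\<in>{b\<in>B. y \<in> b}. g b)"
  proof (rule sum.cong[OF refl])
    fix y assume "y \<in> {..<v}"
    then have "y < v" by simp
    show "(\<Sum>b\<in>{b\<in>B. x \<in> b}. g b) = (\<Sum>b\<in>{b\<in>B. y \<in> b}. g b)"
      using translate[OF x] translate[OF \<open>y < v\<close>] by simp
  qed
  also have "\<dots> = (\<Sum>y<v. \<Sum>b\<in>B. if y \<in> b then g b else 0)"
    using finite_blocks by (simp add: sum.inter_filter)
  also have "\<dots> = (\<Sum>b\<in>B. \<Sum>y<v. if y \<in> b then g b else 0)"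
    by (rule sum.swap)
  also have "\<dots> = (\<Sum>b\<in>B. 3 * g b)"
  proof (rule sum.cong[OF refl])
    fix b assume b: "b \<in> B"
    have "(\<Sum>y<v. if y \<in> b then g b else 0) = (\<Sum>y\<in>{y\<in>{..<v}. y \<in> b}. g b)"
      by (rule sum.inter_filter[symmetric]) simp
    also have "{y\<in>{..<v}. y \<in> b} = b" using block_subset[OF b] by auto
    finally show "(\<Sum>y<v. if y \<in> b then g b else 0) = 3 * g b" using card_block[OF b] by simp
  qed
  finally show ?thesis by (simp only: sum_distrib_left[symmetric])
qed

lemma sum_blocks_off_diag:
  fixes \<phi> :: "nat \<times> nat \<Rightarrow> int"
  shows "(\<Sum>b\<in>B. \<Sum>p\<in>off_diag b. \<phi> p) = (\<Sum>p\<in>off_diag {..<v}. \<phi> p)"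
proof -
  have "off_diag {..<v} = (\<Union>b\<in>B. off_diag b)"
  proof
    show "off_diag {..<v} \<subseteq> (\<Union>b\<in>B. off_diag b)"
    proof
      fix p assume "p \<in> off_diag {..<v}"
      then obtain u w where uw: "p = (u, w)" "u < v" "w < v" "u \<noteq> w" by (auto simp: off_diag_def)
      then obtain b where "b \<in> B" "u \<in> b" "w \<in> b" using ex1_block by blast
      then show "p \<in> (\<Union>b\<in>B. off_diag b)" using uw by (auto simp: off_diag_def)
    qed
    show "(\<Union>b\<in>B. off_diag b) \<subseteq> off_diag {..<v}"
      using block_subset by (fastforce simp: off_diag_def)
  qed
  moreover have "off_diag b \<inter> off_diag b' = {}" if "b \<in> B" "b' \<in> B" "b \<noteq> b'" for b b'
    using that block_unique by (fastforce simp: off_diag_def)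
  moreover have "finite (off_diag b)" if "b \<in> B" for b
    using that block_subset by (auto simp: off_diag_def intro: finite_subset[of _ "{..<v} \<times> {..<v}"])
  ultimately show ?thesis using finite_blocks by (simp add: sum.UNION_disjoint)
qed

lemma point_sum_block_weight:
  assumes x: "x < v"
  shows "(\<Sum>b\<in>{b\<in>B. x \<in> b}. block_weight v E b) = 3 * (\<Sum>d = 1..v div 2. E d)"
proof -
  have "int v * (\<Sum>b\<in>{b\<in>B. x \<in> b}. block_weight v E b) = 3 * (\<Sum>b\<in>B. block_weight v E b)"
    using block_weight_shift block_subset x by (intro point_sum_eq_total) auto
  also have "(\<Sum>b\<in>B. block_weight v E b) =
      (\<Sum>p\<in>off_diag {..<v}. directed_weight v E (fst p) (snd p))"
    unfolding block_weight_def by (rule sum_blocks_off_diag)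
  also have "\<dots> = int v * (\<Sum>d\<in>{1..<v}. if d \<le> v div 2 then E d else 0)"
    unfolding directed_weight_def using v_pos by (rule sum_off_diag_diff_mod)
  also have "(\<Sum>d\<in>{1..<v}. if d \<le> v div 2 then E d else 0) = (\<Sum>d\<in>{d\<in>{1..<v}. d \<le> v div 2}. E d)"
    by (rule sum.inter_filter[symmetric]) simp
  also have "{d\<in>{1..<v}. d \<le> v div 2} = {1..v div 2}"
    using odd_v by auto
  finally show ?thesis using v_pos by simp
qed

end

section \<open>Short blocks and minimal distances\<close>

text \<open>
  For v = 3 (mod 6) these are the blocks of the short orbit, the orbit of {0, v/3, 2v/3}: a block
  is fixed by a nontrivial shift only if it is fixed by the shift by v/3 (stabilizer_short).
\<close>
definition short_block :: "nat \<Rightarrow> nat set \<Rightarrow> bool" where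
  "short_block v b \<longleftrightarrow> shift v (v div 3) ` b = b"

lemma short_block_shift: "short_block v b \<Longrightarrow> short_block v (shift v k ` b)"
  unfolding short_block_def by (metis add.commute image_shift_shift)

lemma short_block_shift_iff: "b \<subseteq> {..<v} \<Longrightarrow> short_block v (shift v k ` b) \<longleftrightarrow> short_block v b"
  using short_block_shift[of v "shift v k ` b" "v - k mod v"] short_block_shift[of v b k]
    image_shift_back[of b v k] by auto

definition min_dist :: "nat \<Rightarrow> nat set \<Rightarrow> nat" where
  "min_dist v b = Min {dist_mod v u w | u w. u \<in> b \<and> w \<in> b \<and> u \<noteq> w}"

lemma min_dist_triple:
  assumes "x \<noteq> y" "y \<noteq> z" "x \<noteq> z"
  shows "min_dist v {x, y, z} = min (dist_mod v x y) (min (dist_mod v x z) (dist_mod v y z))"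
proof -
  have "{dist_mod v u w | u w. u \<in> {x, y, z} \<and> w \<in> {x, y, z} \<and> u \<noteq> w} =
      {dist_mod v x y, dist_mod v x z, dist_mod v y z}"
    using assms by (auto simp: dist_mod_commute)
  then show ?thesis by (simp add: min_dist_def)
qed

context cyclic_sts
begin

lemma shift_fixed_block_mod_3:
  assumes b: "b \<in> B" and d: "0 < d" "d < v" and fixed: "shift v d ` b = b"
  shows "(3 * d) mod v = 0"
proof -
  \<comment> \<open>x, x + d, x + 2d are distinct points of b as v is odd, so x + 3d, also in b, is x.\<close>
  obtain x where x: "x \<in> b" using card_block[OF b] by fastforce
  have xv: "x < v" using x block_subset[OF b] by auto
  define p where "p j = shift v (j * d) x" for j
  have p_in: "p j \<in> b" for j
  proof (induction j)
    case 0
    then show ?case using x xv by (simp add: p_def shift_def)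
  next
    case (Suc j)
    then have "shift v d (p j) \<in> b" using fixed by blast
    then show ?case by (simp add: p_def shift_shift add.commute)
  qed
  have p_ne: "p i \<noteq> p k" if "i \<le> k" "((k - i) * d) mod v \<noteq> 0" for i k
  proof -
    have "p k = shift v ((k - i) * d) (p i)" using that(1) by (simp add: p_def shift_shift algebra_simps)
    then show ?thesis using that(2) shift_eq_self_iff[OF shift_less[OF v_pos]] by (metis p_def)
  qed
  have d1: "d mod v \<noteq> 0" using d by simp
  have d2: "(2 * d) mod v \<noteq> 0"
  proof
    assume "(2 * d) mod v = 0"
    then obtain k where k: "2 * d = v * k" by (auto simp: mod_eq_0_iff_dvd)
    then have "k = 1" using mult_eq_mult_bounds[OF d, of 2 k] by simp
    then show False using k odd_v by (metis dvd_triv_left mult.right_neutral)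
  qed
  have ne: "p 0 \<noteq> p 1" "p 1 \<noteq> p 2" "p 0 \<noteq> p 2" "p 1 \<noteq> p 3" "p 2 \<noteq> p 3"
    by (rule p_ne; use d1 d2 in simp)+
  then have "card {p 0, p 1, p 2} = 3" by simp
  then have "b = {p 0, p 1, p 2}"
    using p_in card_block[OF b] by (intro card_subset_eq[symmetric]) (auto simp: card_ge_0_finite)
  then have "p 3 = p 0" using p_in[of 3] ne by auto
  then show ?thesis using p_ne[of 0 3] by auto
qed

lemma short_block_if_fixed_by_two_thirds:
  assumes "shift v (2 * (v div 3)) ` b = b"
  shows "short_block v b"
proof -
  have four_thirds: "2 * (v div 3) + 2 * (v div 3) = v div 3 + v" using v_eq_3_mult by linarith
  have "(2 * (v div 3) + 2 * (v div 3)) mod v = v div 3" unfolding four_thirds using v_pos by simp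
  then have "shift v (v div 3) ` b = shift v ((2 * (v div 3) + 2 * (v div 3)) mod v) ` b" by simp
  also have "\<dots> = shift v (2 * (v div 3)) ` shift v (2 * (v div 3)) ` b"
    by (simp only: image_shift_shift flip: image_shift_mod)
  also have "\<dots> = b" using assms by simp
  finally show ?thesis by (simp add: short_block_def)
qed

lemma stabilizer_short:
  assumes b: "b \<in> B" and d: "0 < d" "d < v" and fixed: "shift v d ` b = b"
  shows "short_block v b"
proof -
  obtain q where q: "3 * d = v * q"
    using shift_fixed_block_mod_3[OF assms] by (auto simp: mod_eq_0_iff_dvd)
  then have "q = 1 \<or> q = 2" using mult_eq_mult_bounds[OF d, of 3 q] by auto
  then consider "d = v div 3" | "d = 2 * (v div 3)" using q v_eq_3_mult by auto
  then show ?thesis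
    using fixed short_block_if_fixed_by_two_thirds by cases (simp_all add: short_block_def)
qed

lemma dist_eq_shift_block:
  assumes b: "b \<in> B" "u \<in> b" "w \<in> b" "u \<noteq> w" and b': "b' \<in> B" "u' \<in> b'" "w' \<in> b'" "u' \<noteq> w'"
    and eq: "dist_mod v u w = dist_mod v u' w'"
  obtains k where "shift v k ` b = b'" "shift v k ` {u, w} = {u', w'}"
proof -
  have directed: "\<exists>p q. {p, q} = {u, w} \<and> diff_mod v p q = dist_mod v u w" for u w
  proof -
    have "diff_mod v u w = dist_mod v u w \<or> diff_mod v w u = dist_mod v u w"
      by (simp add: dist_mod_def min_def)
    then show ?thesis by (metis insert_commute)
  qed
  obtain p q where pq: "{p, q} = {u, w}" "diff_mod v p q = dist_mod v u w"
    using directed[of u w] by metis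
  obtain p' q' where pq': "{p', q'} = {u', w'}" "diff_mod v p' q' = dist_mod v u' w'"
    using directed[of u' w'] by metis
  have "{p, q} \<subseteq> b" "{p', q'} \<subseteq> b'" using pq(1) pq'(1) b b' by auto
  then have "p < v" "q < v" "p' < v" "q' < v"
    using block_subset[OF b(1)] block_subset[OF b'(1)] by auto
  then have "shift v (diff_mod v p p') ` {p, q} = {p', q'}"
    using shift_diff_mod_pair pq(2) pq'(2) eq by auto
  then have pair: "shift v (diff_mod v p p') ` {u, w} = {u', w'}" by (simp only: pq(1) pq'(1))
  then have "{u', w'} \<subseteq> shift v (diff_mod v p p') ` b" using b(2,3) by blast
  then have "shift v (diff_mod v p p') ` b = b'"
    using block_unique[OF shift_block[OF b(1)] b'(1) _ _ b'(2-4)] by simp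
  then show thesis using pair by (rule that)
qed

lemma same_dist_short:
  assumes b: "b \<in> B" "u \<in> b" "w \<in> b" "w' \<in> b" "u \<noteq> w" "u \<noteq> w'" "w \<noteq> w'"
    and eq: "dist_mod v u w = dist_mod v u w'"
  shows "short_block v b"
proof -
  obtain k where k: "shift v k ` b = b" "shift v k ` {u, w} = {u, w'}"
    using dist_eq_shift_block[OF b(1-3,5) b(1,2,4,6) eq] by blast
  have "k mod v \<noteq> 0"
  proof
    assume "k mod v = 0"
    moreover have "u < v" "w < v" using b block_subset by auto
    ultimately have "shift v k u = u" "shift v k w = w" by (simp_all add: shift_eq_self_iff)
    then have "shift v k ` {u, w} = {u, w}" by simp
    then show False using k(2) b(7) by (auto simp: doubleton_eq_iff)
  qed
  moreover have "shift v (k mod v) ` b = b" using k(1) image_shift_mod by metis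
  ultimately show ?thesis using stabilizer_short[OF b(1)] v_pos by simp
qed

lemma min_dist_attained:
  assumes "b \<in> B"
  obtains u w where "u \<in> b" "w \<in> b" "u \<noteq> w" "min_dist v b = dist_mod v u w"
proof -
  obtain x y z where xyz: "b = {x, y, z}" "x \<noteq> y" "y \<noteq> z" "x \<noteq> z"
    using block_triple[OF assms] by blast
  then have "min_dist v b \<in> {dist_mod v x y, dist_mod v x z, dist_mod v y z}"
    by (simp add: min_dist_triple min_def)
  then show thesis using that[of x y] that[of x z] that[of y z] xyz by auto
qed

lemma min_dist_le:
  assumes "u \<in> b" "w \<in> b" "u \<noteq> w" "b \<in> B"
  shows "min_dist v b \<le> dist_mod v u w"
proof -
  have "finite b" by (rule card_ge_0_finite) (simp add: card_block[OF \<open>b \<in> B\<close>])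
  have "{dist_mod v u w | u w. u \<in> b \<and> w \<in> b \<and> u \<noteq> w} \<subseteq> case_prod (dist_mod v) ` (b \<times> b)"
    by auto
  then have "finite {dist_mod v u w | u w. u \<in> b \<and> w \<in> b \<and> u \<noteq> w}"
    by (rule finite_subset) (simp add: \<open>finite b\<close>)
  then show ?thesis unfolding min_dist_def using assms by (intro Min_le) auto
qed

lemma min_dist_shift: "b \<in> B \<Longrightarrow> min_dist v (shift v k ` b) = min_dist v b"
proof -
  assume "b \<in> B"
  then obtain x y z where xyz: "b = {x, y, z}" "x \<noteq> y" "y \<noteq> z" "x \<noteq> z" "x < v" "y < v" "z < v"
    by (rule block_triple)
  then have "shift v k x \<noteq> shift v k y" "shift v k y \<noteq> shift v k z" "shift v k x \<noteq> shift v k z"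
    using shift_inj[of x v y k] shift_inj[of y v z k] shift_inj[of x v z k] by auto
  then show ?thesis using xyz by (simp add: min_dist_triple dist_mod_shift)
qed

text \<open>
  Blocks sharing a distance lie in one orbit (dist_eq_shift_block), so this set has one element for
  each orbit of blocks satisfying P.
\<close>
definition min_dists :: "(nat set \<Rightarrow> bool) \<Rightarrow> nat set" where
  "min_dists P = min_dist v ` {b \<in> B. P b}"

lemma min_dists_subset: "min_dists P \<subseteq> {1..v div 2}"
proof
  fix d assume "d \<in> min_dists P"
  then obtain b where "b \<in> B" "d = min_dist v b" by (auto simp: min_dists_def)
  moreover obtain u w where "u \<in> b" "w \<in> b" "u \<noteq> w" "min_dist v b = dist_mod v u w"
    using min_dist_attained[OF \<open>b \<in> B\<close>] by blast
  moreover have "u < v" "w < v" using calculation block_subset by auto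
  ultimately show "d \<in> {1..v div 2}" using dist_mod_bounds[OF odd_v] by simp
qed

lemma finite_min_dists: "finite (min_dists P)"
  using min_dists_subset finite_subset by blast

lemma mem_min_dists_iff:
  assumes inv: "\<And>b k. b \<in> B \<Longrightarrow> P (shift v k ` b) = P b"
    and b: "b \<in> B" "u \<in> b" "w \<in> b" "u \<noteq> w"
  shows "dist_mod v u w \<in> min_dists P \<longleftrightarrow> P b \<and> dist_mod v u w = min_dist v b"
proof
  assume "dist_mod v u w \<in> min_dists P"
  then obtain b' where b': "b' \<in> B" "P b'" "dist_mod v u w = min_dist v b'"
    by (auto simp: min_dists_def)
  obtain u' w' where u'w': "u' \<in> b'" "w' \<in> b'" "u' \<noteq> w'" "min_dist v b' = dist_mod v u' w'"
    using min_dist_attained[OF b'(1)] by blast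
  then have "dist_mod v u w = dist_mod v u' w'" using b'(3) by simp
  then obtain k where k: "shift v k ` b = b'"
    using dist_eq_shift_block[OF b b'(1) u'w'(1-3)] by blast
  have "P b" using inv[OF b(1), of k] k b'(2) by simp
  moreover have "min_dist v b = min_dist v b'" using min_dist_shift[OF b(1), of k] k by simp
  ultimately show "P b \<and> dist_mod v u w = min_dist v b" using b'(3) by simp
next
  assume "P b \<and> dist_mod v u w = min_dist v b"
  then show "dist_mod v u w \<in> min_dists P" using b(1) by (auto simp: min_dists_def)
qed

lemma block_weight_min_dists:
  fixes G :: "nat \<Rightarrow> int"
  assumes inv: "\<And>b k. b \<in> B \<Longrightarrow> P (shift v k ` b) = P b"
    and not_short: "\<And>b. b \<in> B \<Longrightarrow> P b \<Longrightarrow> \<not> short_block v b"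
    and b: "b \<in> B"
  shows "block_weight v (\<lambda>d. if d \<in> min_dists P then G d else 0) b = (if P b then G (min_dist v b) else 0)"
proof -
  obtain x y z where xyz: "b = {x, y, z}" "x \<noteq> y" "y \<noteq> z" "x \<noteq> z" "x < v" "y < v" "z < v"
    using block_triple[OF b] by blast
  let ?d1 = "dist_mod v x y" and ?d2 = "dist_mod v x z" and ?d3 = "dist_mod v y z"
  let ?E = "\<lambda>d. if d \<in> min_dists P then G d else 0"
  have in_b: "x \<in> b" "y \<in> b" "z \<in> b" using xyz(1) by auto
  have E: "?E ?d1 = (if P b \<and> ?d1 = min_dist v b then G ?d1 else 0)"
    "?E ?d2 = (if P b \<and> ?d2 = min_dist v b then G ?d2 else 0)"
    "?E ?d3 = (if P b \<and> ?d3 = min_dist v b then G ?d3 else 0)"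
    using mem_min_dists_iff[OF inv b in_b(1,2) xyz(2)] mem_min_dists_iff[OF inv b in_b(1,3) xyz(4)]
      mem_min_dists_iff[OF inv b in_b(2,3) xyz(3)] by simp_all
  have weight: "block_weight v ?E b = ?E ?d1 + ?E ?d2 + ?E ?d3"
    unfolding xyz(1) by (rule block_weight_triple[OF odd_v xyz(5-7) xyz(2-4)])
  have min: "min_dist v b = min ?d1 (min ?d2 ?d3)" unfolding xyz(1) by (rule min_dist_triple[OF xyz(2-4)])
  show ?thesis
  proof (cases "P b")
    case True
    then have ns: "\<not> short_block v b" using not_short[OF b] by blast
    have "?d1 \<noteq> ?d2" using same_dist_short[OF b in_b(1,2,3) xyz(2,4,3)] ns by blast
    moreover have "?d1 \<noteq> ?d3"
      using same_dist_short[OF b in_b(2,1,3)] xyz(2-4) ns dist_mod_commute[of v x y] by auto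
    moreover have "?d2 \<noteq> ?d3"
      using same_dist_short[OF b in_b(3,1,2)] xyz(2-4) ns dist_mod_commute[of v x z] dist_mod_commute[of v y z]
      by auto
    ultimately show ?thesis using True weight E min by (auto simp: min_def)
  next
    case False
    then show ?thesis using weight E by simp
  qed
qed

lemma point_sum_min_dists:
  fixes G :: "nat \<Rightarrow> int"
  assumes inv: "\<And>b k. b \<in> B \<Longrightarrow> P (shift v k ` b) = P b"
    and not_short: "\<And>b. b \<in> B \<Longrightarrow> P b \<Longrightarrow> \<not> short_block v b"
    and x: "x < v"
  shows "(\<Sum>b\<in>{b\<in>B. x \<in> b}. if P b then G (min_dist v b) else 0) = 3 * (\<Sum>d\<in>min_dists P. G d)"
proof -
  have "(\<Sum>b\<in>{b\<in>B. x \<in> b}. if P b then G (min_dist v b) else 0) =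
      (\<Sum>b\<in>{b\<in>B. x \<in> b}. block_weight v (\<lambda>d. if d \<in> min_dists P then G d else 0) b)"
    using block_weight_min_dists[OF inv not_short] by simp
  also have "\<dots> = 3 * (\<Sum>d = 1..v div 2. if d \<in> min_dists P then G d else 0)"
    using x by (rule point_sum_block_weight)
  also have "(\<Sum>d = 1..v div 2. if d \<in> min_dists P then G d else 0) = (\<Sum>d\<in>min_dists P. G d)"
    using min_dists_subset[of P] by (subst sum.inter_restrict[symmetric]) (simp_all add: Int_absorb1 Int_absorb2)
  finally show ?thesis .
qed

lemma short_block_mem: "short_block v b \<Longrightarrow> y \<in> b \<Longrightarrow> shift v (v div 3) y \<in> b"
  unfolding short_block_def by blast

lemma short_block_unique:
  assumes "b \<in> B" "b' \<in> B" "short_block v b" "short_block v b'" "x \<in> b" "x \<in> b'"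
  shows "b = b'"
proof -
  have "x < v" using assms block_subset by auto
  then have "shift v (v div 3) x \<noteq> x" using v_eq_3_mult v_pos by (simp add: shift_eq_self_iff)
  then show ?thesis using assms short_block_mem block_unique by metis
qed

lemma short_block_exists: "\<exists>b\<in>B. short_block v b"
proof (rule ccontr)
  assume no_short: "\<not> (\<exists>b\<in>B. short_block v b)"
  let ?P = "\<lambda>b. \<not> short_block v b"
  have inv: "\<And>b k. b \<in> B \<Longrightarrow> ?P (shift v k ` b) = ?P b"
    using short_block_shift_iff block_subset by blast
  have "(\<Sum>b\<in>{b\<in>B. 0 \<in> b}. if ?P b then (1::int) else 0) = 3 * (\<Sum>d\<in>min_dists ?P. 1)"
    using point_sum_min_dists[OF inv, of 0 "\<lambda>_. 1"] v_pos by simp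
  then have through_0: "card {b\<in>B. 0 \<in> b} = 3 * card (min_dists ?P)"
    using no_short by simp
  have "block_weight v (\<lambda>_. 1) b = 3" if "b \<in> B" for b
    using block_triple[OF that] odd_v by (metis block_weight_triple one_add_one numeral_Bit1 numeral_One)
  then have "(\<Sum>b\<in>{b\<in>B. 0 \<in> b}. block_weight v (\<lambda>_. 1) b) = 3 * int (card {b\<in>B. 0 \<in> b})"
    by simp
  moreover have "(\<Sum>b\<in>{b\<in>B. 0 \<in> b}. block_weight v (\<lambda>_. 1) b) = 3 * int (v div 2)"
    using point_sum_block_weight[of 0 "\<lambda>_. 1"] v_pos by simp
  ultimately have "v div 2 = 3 * card (min_dists ?P)" using through_0 by simp
  then show False using v_mod_6 by presburger
qed

lemma point_sum_short:
  fixes c :: int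
  assumes x: "x < v"
  shows "(\<Sum>b\<in>{b\<in>B. x \<in> b}. if short_block v b then c else 0) = c"
proof -
  obtain b1 y where b1: "b1 \<in> B" "short_block v b1" "y \<in> b1"
    using short_block_exists card_block by fastforce
  have "y < v" using b1 block_subset by auto
  define b where "b = shift v (diff_mod v y x) ` b1"
  have "x = shift v (diff_mod v y x) y" using add_diff_mod[OF \<open>y < v\<close> x] by (simp add: shift_def)
  then have b: "b \<in> B" "short_block v b" "x \<in> b"
    using b1 shift_block short_block_shift by (auto simp: b_def)
  then have "{b'\<in>{b\<in>B. x \<in> b}. short_block v b'} = {b}" using short_block_unique by blast
  then show ?thesis using finite_blocks by (simp add: sum.inter_filter[symmetric])
qed

lemma card_short_blocks: "3 * card {b\<in>B. short_block v b} = v"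
proof -
  let ?g = "\<lambda>b. if short_block v b then 1 else (0::int)"
  have "int v * (\<Sum>b\<in>{b\<in>B. 0 \<in> b}. ?g b) = 3 * (\<Sum>b\<in>B. ?g b)"
    using short_block_shift_iff block_subset v_pos by (intro point_sum_eq_total) auto
  then show ?thesis using point_sum_short[of 0 1] v_pos finite_blocks
    by (simp add: sum.inter_filter[symmetric])
qed

end

section \<open>A zero-sum 4-flow\<close>

definition alternating_sign :: "nat set \<Rightarrow> nat \<Rightarrow> int" where
  "alternating_sign A d = (-1) ^ card {e \<in> A. e < d}"

lemma sum_alternating_sign:
  assumes "finite A"
  shows "(\<Sum>d\<in>A. alternating_sign A d) = (if even (card A) then 0 else 1)"
  using assms
proof (induction "card A" arbitrary: A)
  case 0
  then show ?case by simp
next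
  case (Suc n)
  define a where "a = Max A"
  define A' where "A' = A - {a}"
  have "A \<noteq> {}" using Suc.hyps(2) by auto
  then have a: "a \<in> A" using Suc.prems by (simp add: a_def)
  have card_A': "card A' = n" "finite A'" using Suc a by (simp_all add: A'_def)
  have below_a: "{e \<in> A. e < a} = A'"
    using Max_ge[OF Suc.prems] a by (fastforce simp: A'_def a_def le_less)
  have "alternating_sign A d = alternating_sign A' d" if "d \<in> A'" for d
  proof -
    have "d < a" using that below_a by blast
    then have "{e \<in> A. e < d} = {e \<in> A'. e < d}" by (auto simp: A'_def)
    then show ?thesis by (simp add: alternating_sign_def)
  qed
  then have "(\<Sum>d\<in>A. alternating_sign A d) = (-1) ^ n + (\<Sum>d\<in>A'. alternating_sign A' d)"
    using Suc.prems a below_a card_A' by (simp add: sum.remove alternating_sign_def A'_def)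
  also have "\<dots> = (-1) ^ n + (if even n then 0 else 1)" using Suc.hyps(1) card_A' by simp
  finally show ?case using Suc.hyps(2) by (simp flip: Suc.hyps(2))
qed

lemma alternating_sign_cases: "alternating_sign A d = 1 \<or> alternating_sign A d = -1"
  by (simp add: alternating_sign_def minus_one_power_iff)

context cyclic_sts
begin

lemma one_in_min_dists:
  assumes "v > 3"
  shows "1 \<in> min_dists (\<lambda>b. \<not> short_block v b)"
proof -
  obtain b where b: "b \<in> B" "0 \<in> b" "1 \<in> b" using ex1_block[of 0 1] assms by auto
  have not_short: "\<not> short_block v b"
  proof
    assume "short_block v b"
    then have "shift v (v div 3) 0 \<in> b" "shift v (v div 3) 1 \<in> b" using b short_block_mem by auto
    moreover have "shift v (v div 3) 0 = v div 3" "shift v (v div 3) 1 = v div 3 + 1"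
      using assms v_eq_3_mult by (simp_all add: shift_def)
    ultimately have "{0, 1, v div 3, v div 3 + 1} \<subseteq> b" using b by auto
    moreover have "finite b" by (rule card_ge_0_finite) (simp add: card_block[OF b(1)])
    ultimately have "card {0, 1, v div 3, v div 3 + 1} \<le> 3" using card_mono card_block[OF b(1)] by metis
    moreover have "v div 3 \<ge> 2" using assms v_mod_6 by presburger
    ultimately show False by simp
  qed
  have "dist_mod v 0 1 = 1" using assms by (simp add: dist_mod_def diff_mod_eq)
  then have "min_dist v b \<le> 1" using min_dist_le[OF b(2,3) _ b(1)] by simp
  moreover obtain u w where "u \<in> b" "w \<in> b" "u \<noteq> w" "min_dist v b = dist_mod v u w"
    using min_dist_attained[OF b(1)] by blast
  moreover have "u < v" "w < v" using calculation b(1) block_subset by auto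
  ultimately have "min_dist v b = 1" using dist_mod_bounds[OF odd_v, of u w] by linarith
  then show ?thesis using b(1) not_short unfolding min_dists_def by force
qed

lemma zero_sum_flow_4:
  assumes "v > 3"
  shows "admits_zero_sum_flow 4 v B"
proof -
  let ?P = "\<lambda>b. \<not> short_block v b"
  let ?A = "min_dists ?P - {1}"
  define S where "S = (\<Sum>d\<in>?A. alternating_sign ?A d)"
  \<comment> \<open>The orbit through {0, 1} corrects the parity so that the weights sum to -1, which
    cancels the weight 3 of the short block through each point.\<close>
  define G where "G d = (if d = 1 then -1 - S else alternating_sign ?A d)" for d
  define f where "f b = (if short_block v b then 3 else G (min_dist v b))" for b
  have inv: "\<And>b k. b \<in> B \<Longrightarrow> ?P (shift v k ` b) = ?P b"
    using short_block_shift_iff block_subset by blast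
  have S: "S = 0 \<or> S = 1" using sum_alternating_sign[of ?A] finite_min_dists by (simp add: S_def)
  have "(\<Sum>d\<in>min_dists ?P. G d) = G 1 + (\<Sum>d\<in>?A. G d)"
    using one_in_min_dists[OF assms] finite_min_dists by (simp add: sum.remove)
  also have "\<dots> = -1" by (simp add: G_def S_def)
  finally have sum_G: "(\<Sum>d\<in>min_dists ?P. G d) = -1" .
  have "f b \<noteq> 0 \<and> \<bar>f b\<bar> \<le> int 4 - 1" for b
    using S alternating_sign_cases[of ?A "min_dist v b"] by (auto simp: f_def G_def)
  moreover have "(\<Sum>b\<in>{b\<in>B. x \<in> b}. f b) = 0" if "x < v" for x
  proof -
    have "f b = (if short_block v b then 3 else 0) + (if ?P b then G (min_dist v b) else 0)" for b
      by (simp add: f_def)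
    then have "(\<Sum>b\<in>{b\<in>B. x \<in> b}. f b) = (\<Sum>b\<in>{b\<in>B. x \<in> b}. if short_block v b then 3 else 0)
        + (\<Sum>b\<in>{b\<in>B. x \<in> b}. if ?P b then G (min_dist v b) else 0)"
      by (simp add: sum.distrib)
    also have "\<dots> = 3 + 3 * (\<Sum>d\<in>min_dists ?P. G d)"
      using point_sum_short[OF that] point_sum_min_dists[OF inv _ that] by simp
    finally show ?thesis using sum_G by simp
  qed
  ultimately have "zero_sum_flow 4 v B f" by (simp add: zero_sum_flow_def)
  then show ?thesis by (auto simp: admits_zero_sum_flow_def)
qed

end

section \<open>Counting blocks by type\<close>

definition residue_count :: "nat set \<Rightarrow> nat" where
  "residue_count b = card ((\<lambda>x. x mod 3) ` b)"

definition same_residue_pairs :: "nat set \<Rightarrow> int" where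
  "same_residue_pairs b = (\<Sum>p\<in>off_diag b. if fst p mod 3 = snd p mod 3 then 1 else 0)"

text \<open>
  The contribution of one block to the double count in card_type_3_blocks: blocks of Type 3, 2
  and 1 contain 0, 2 and 6 ordered pairs of points in a common residue class.
\<close>
lemma same_residue_pairs_triple:
  fixes x y z :: nat
  assumes "x \<noteq> y" "y \<noteq> z" "x \<noteq> z"
  shows "2 - same_residue_pairs {x, y, z} =
    2 * (if residue_count {x, y, z} = 3 then 1 else 0) - 4 * (if residue_count {x, y, z} = 1 then 1 else 0)"
  using assms
  by (cases "x mod 3 = y mod 3"; cases "x mod 3 = z mod 3"; cases "y mod 3 = z mod 3")
    (auto simp: same_residue_pairs_def residue_count_def sum_off_diag_triple card_insert_if)

context cyclic_sts
begin

lemma card_blocks: "6 * int (card B) = int v * (int v - 1)"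
proof -
  have "(\<Sum>b\<in>B. \<Sum>p\<in>off_diag b. (1::int)) = 6 * int (card B)"
  proof -
    have "(\<Sum>p\<in>off_diag b. (1::int)) = 6" if b: "b \<in> B" for b
    proof -
      obtain x y z where "b = {x, y, z}" "x \<noteq> y" "y \<noteq> z" "x \<noteq> z" using block_triple[OF b] by blast
      then show ?thesis using sum_off_diag_triple[of x y z "\<lambda>_. 1"] by simp
    qed
    then show ?thesis by simp
  qed
  moreover have "(\<Sum>b\<in>B. \<Sum>p\<in>off_diag b. (1::int)) = int v * (int v - 1)"
    using sum_blocks_off_diag[of "\<lambda>_. 1"] sum_off_diag_diff_mod[OF v_pos, of "\<lambda>_. 1"] v_pos
    by (simp add: of_nat_diff)
  ultimately show ?thesis by simp
qed

lemma sum_same_residue_pairs: "(\<Sum>b\<in>B. same_residue_pairs b) = int v * (int (v div 3) - 1)"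
proof -
  have "(\<Sum>b\<in>B. same_residue_pairs b) =
      (\<Sum>p\<in>off_diag {..<v}. if diff_mod v (fst p) (snd p) mod 3 = 0 then 1 else 0)"
    unfolding same_residue_pairs_def sum_blocks_off_diag
  proof (rule sum.cong[OF refl])
    fix p assume "p \<in> off_diag {..<v}"
    then have "fst p < v" "snd p < v" by (auto simp: off_diag_def)
    then show "(if fst p mod 3 = snd p mod 3 then 1 else 0) =
        (if diff_mod v (fst p) (snd p) mod 3 = 0 then 1 else (0::int))"
      using diff_mod_mod_3_eq_0_iff[OF three_dvd_v] by simp
  qed
  also have "\<dots> = int v * (\<Sum>d\<in>{1..<v}. if d mod 3 = 0 then 1 else 0)"
    using v_pos by (rule sum_off_diag_diff_mod)
  also have "{d\<in>{1..<v}. d mod 3 = 0} = (\<lambda>j. 3 * j) ` {1..<v div 3}"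
    using v_eq_3_mult by (auto simp: image_iff)
  then have "(\<Sum>d\<in>{1..<v}. if d mod 3 = 0 then 1 else 0) = int (v div 3 - 1)"
    by (simp add: sum.inter_filter[symmetric] card_image inj_on_def)
  finally show ?thesis using v_pos v_eq_3_mult by (simp add: of_nat_diff)
qed

lemma card_type_3_blocks:
  "int (card {b\<in>B. residue_count b = 3}) = int (v div 3) + 2 * int (card {b\<in>B. residue_count b = 1})"
proof -
  have "(\<Sum>b\<in>B. 2 - same_residue_pairs b) =
      (\<Sum>b\<in>B. 2 * (if residue_count b = 3 then 1 else 0) - 4 * (if residue_count b = 1 then 1 else 0))"
  proof (rule sum.cong[OF refl])
    fix b assume "b \<in> B"
    then obtain x y z where "b = {x, y, z}" "x \<noteq> y" "y \<noteq> z" "x \<noteq> z" by (rule block_triple)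
    then show "2 - same_residue_pairs b =
        2 * (if residue_count b = 3 then 1 else 0) - 4 * (if residue_count b = 1 then 1 else 0)"
      using same_residue_pairs_triple by simp
  qed
  then have "2 * int (card B) - int v * (int (v div 3) - 1) =
      2 * int (card {b\<in>B. residue_count b = 3}) - 4 * int (card {b\<in>B. residue_count b = 1})"
    using finite_blocks
    by (simp add: sum_subtractf sum_same_residue_pairs sum_distrib_left[symmetric] sum.inter_filter[symmetric])
  moreover have "int v = 3 * int (v div 3)" using v_eq_3_mult by simp
  ultimately show ?thesis using card_blocks by (simp add: algebra_simps)
qed

lemma type_3_block_not_short:
  assumes "b1 \<in> B" "residue_count b1 = 1"
  shows "\<exists>b\<in>B. residue_count b = 3 \<and> \<not> short_block v b"
proof (rule ccontr)
  assume "\<not> ?thesis"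
  then have "{b\<in>B. residue_count b = 3} \<subseteq> {b\<in>B. short_block v b}" by auto
  then have "card {b\<in>B. residue_count b = 3} \<le> card {b\<in>B. short_block v b}"
    using finite_blocks by (intro card_mono) auto
  moreover have "card {b\<in>B. residue_count b = 1} > 0"
    using assms finite_blocks by (auto simp: card_gt_0_iff)
  ultimately show False using card_type_3_blocks card_short_blocks by linarith
qed

end

section \<open>A zero-sum 3-flow\<close>

lemma sum_diff_mod_residues:
  fixes h :: "nat \<Rightarrow> int"
  assumes "3 dvd v" "x < v" "b \<subseteq> {..<v}" "card b = 3" "residue_count b = 3"
  shows "(\<Sum>p\<in>b. h (diff_mod v p x mod 3)) = h 0 + h 1 + h 2"
proof -
  let ?r = "\<lambda>p. diff_mod v p x mod 3"
  have "finite b" using assms(4) card_ge_0_finite by force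
  have "inj_on (\<lambda>p. p mod 3) b"
    using assms(4,5) \<open>finite b\<close> by (simp add: residue_count_def eq_card_imp_inj_on)
  moreover have "?r p = ?r q \<longleftrightarrow> p mod 3 = q mod 3" if "p \<in> b" "q \<in> b" for p q
  proof -
    have "p < v" "q < v" using that assms(3) by auto
    then show ?thesis using diff_mod_mod_3_eq_iff assms(1,2) by blast
  qed
  ultimately have inj: "inj_on ?r b" by (simp add: inj_on_def)
  have "?r ` b \<subseteq> {0, 1, 2}" by auto
  moreover have "card (?r ` b) = 3" using inj assms(4) by (simp add: card_image)
  ultimately have "?r ` b = {0, 1, 2}" by (intro card_subset_eq) auto
  then have "(\<Sum>p\<in>b. h (?r p)) = (\<Sum>j\<in>{0, 1, 2}. h j)" using sum.reindex[OF inj, of h] by simp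
  then show ?thesis by simp
qed

lemma block_orbit_eq_image: "block_orbit v b = (\<lambda>k. shift v k ` b) ` {..<v}"
  by (auto simp: block_orbit_def)

lemma shift_mem_block_orbit_iff:
  assumes "0 < v" "c \<subseteq> {..<v}"
  shows "shift v k ` c \<in> block_orbit v b \<longleftrightarrow> c \<in> block_orbit v b"
proof -
  have closed: "shift v k ` c \<in> block_orbit v b" if c: "c \<in> block_orbit v b" for c k
  proof -
    obtain j where "c = shift v j ` b" using c by (auto simp: block_orbit_def)
    then have "shift v k ` c = shift v ((j + k) mod v) ` b"
      by (simp add: image_shift_shift flip: image_shift_mod)
    then show ?thesis using \<open>0 < v\<close> by (auto simp: block_orbit_def)
  qed
  show ?thesis using closed image_shift_back[OF assms(2), of k] by metis
qed

lemma block_orbit_not_short: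
  "b \<subseteq> {..<v} \<Longrightarrow> \<not> short_block v b \<Longrightarrow> c \<in> block_orbit v b \<Longrightarrow> \<not> short_block v c"
  using short_block_shift_iff by (auto simp: block_orbit_def)

text \<open>The shift k < v producing c from b; meaningless for blocks c outside the orbit of b.\<close>
definition orbit_index :: "nat \<Rightarrow> nat set \<Rightarrow> nat set \<Rightarrow> nat" where
  "orbit_index v b = the_inv_into {..<v} (\<lambda>k. shift v k ` b)"

context cyclic_sts
begin

lemma inj_on_shift_orbit:
  assumes b: "b \<in> B" "\<not> short_block v b"
  shows "inj_on (\<lambda>k. shift v k ` b) {..<v}"
proof -
  have shift_back: "shift v (v - k) ` shift v j ` b = shift v (j - k) ` b" if "k \<le> j" "j < v" for j k
  proof -
    have "(j + (v - k)) mod v = j - k" using that by (simp add: mod_if)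
    then show ?thesis by (metis image_shift_shift image_shift_mod)
  qed
  have ne: "shift v k ` b \<noteq> shift v k' ` b" if "k < k'" "k' < v" for k k'
  proof
    assume "shift v k ` b = shift v k' ` b"
    then have "shift v (k' - k) ` b = shift v 0 ` b" using shift_back[of k k'] shift_back[of k k] that by simp
    then have "shift v (k' - k) ` b = b" using image_shift_mult[OF block_subset[OF b(1)], of 0] by simp
    moreover have "0 < k' - k" "k' - k < v" using that by auto
    ultimately show False using stabilizer_short[OF b(1)] b(2) by blast
  qed
  show ?thesis
  proof (rule inj_onI)
    fix k k' assume "k \<in> {..<v}" "k' \<in> {..<v}" and eq: "shift v k ` b = shift v k' ` b"
    show "k = k'"
    proof (rule ccontr)
      assume "k \<noteq> k'"
      then have "k < k' \<or> k' < k" by arith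
      then show False using ne[of k k'] ne[of k' k] \<open>k \<in> {..<v}\<close> \<open>k' \<in> {..<v}\<close> eq by auto
    qed
  qed
qed

lemma point_sum_orbit:
  fixes \<phi> :: "nat \<Rightarrow> int"
  assumes b: "b \<in> B" "\<not> short_block v b" and x: "x < v"
  shows "(\<Sum>c\<in>{c\<in>B. x \<in> c}. if c \<in> block_orbit v b then \<phi> (orbit_index v b c) else 0) =
    (\<Sum>p\<in>b. \<phi> (diff_mod v p x))"
proof -
  let ?K = "{k\<in>{..<v}. x \<in> shift v k ` b}"
  have inj: "inj_on (\<lambda>k. shift v k ` b) {..<v}" using inj_on_shift_orbit[OF b] .
  have "{c\<in>{c\<in>B. x \<in> c}. c \<in> block_orbit v b} = (\<lambda>k. shift v k ` b) ` ?K"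
    using b(1) shift_block by (auto simp: block_orbit_eq_image)
  then have "(\<Sum>c\<in>{c\<in>B. x \<in> c}. if c \<in> block_orbit v b then \<phi> (orbit_index v b c) else 0) =
      (\<Sum>c\<in>(\<lambda>k. shift v k ` b) ` ?K. \<phi> (orbit_index v b c))"
    using finite_blocks by (simp add: sum.inter_filter[symmetric])
  also have "\<dots> = (\<Sum>k\<in>?K. \<phi> (orbit_index v b (shift v k ` b)))"
    using inj_on_subset[OF inj, of ?K] by (simp add: sum.reindex subset_iff)
  also have "\<dots> = (\<Sum>k\<in>?K. \<phi> k)"
    by (rule sum.cong) (simp_all add: orbit_index_def the_inv_into_f_f[OF inj])
  also have "\<dots> = (\<Sum>p\<in>b. \<phi> (diff_mod v p x))"
    using shifts_hitting_point[OF block_subset[OF b(1)] x] inj_on_diff_mod_point[OF block_subset[OF b(1)] x]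
    by (simp add: sum.reindex)
  finally show ?thesis .
qed

lemma full_orbit_not_short:
  assumes "b \<in> B" "card (block_orbit v b) = v"
  shows "\<not> short_block v b"
proof
  assume "short_block v b"
  then have "shift v 0 ` b = shift v (v div 3) ` b"
    using image_shift_mult[OF block_subset[OF assms(1)], of 0] by (simp add: short_block_def)
  moreover have "0 \<noteq> v div 3" "v div 3 < v" using v_eq_3_mult v_pos by linarith+
  ultimately have "\<not> inj_on (\<lambda>k. shift v k ` b) {..<v}"
    using v_pos inj_onD[of "\<lambda>k. shift v k ` b" "{..<v}" 0 "v div 3"] by auto
  then show False using assms(2) by (simp add: block_orbit_eq_image inj_on_iff_eq_card)
qed

lemma zero_sum_flow_3:
  assumes b: "b \<in> B" "residue_count b = 3" "\<not> short_block v b"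
  shows "admits_zero_sum_flow 3 v B"
proof -
  define P where "P c \<longleftrightarrow> \<not> short_block v c \<and> c \<notin> block_orbit v b" for c
  define S where "S = (\<Sum>d\<in>min_dists P. alternating_sign (min_dists P) d)"
  \<comment> \<open>At every point the blocks of the orbit of b contribute h 0 + h 1 + h 2 = -1 - 3 * S, which
    cancels the short block and the other full orbits.\<close>
  define h where "h r = (if r = 0 then 1 - 3 * S else -1)" for r :: nat
  define f where "f c = (if c \<in> block_orbit v b then h (orbit_index v b c mod 3)
      else if short_block v c then 1 else alternating_sign (min_dists P) (min_dist v c))" for c
  have inv: "\<And>c k. c \<in> B \<Longrightarrow> P (shift v k ` c) = P c"
    using shift_mem_block_orbit_iff[OF v_pos] short_block_shift_iff block_subset by (simp add: P_def)
  have P_not_short: "\<And>c. c \<in> B \<Longrightarrow> P c \<Longrightarrow> \<not> short_block v c" by (simp add: P_def)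
  have S: "S = 0 \<or> S = 1" using sum_alternating_sign finite_min_dists by (simp add: S_def)
  have "f c \<noteq> 0 \<and> \<bar>f c\<bar> \<le> int 3 - 1" for c
    using S alternating_sign_cases[of "min_dists P" "min_dist v c"] by (auto simp: f_def h_def)
  moreover have "(\<Sum>c\<in>{c\<in>B. x \<in> c}. f c) = 0" if x: "x < v" for x
  proof -
    have "f c = (if c \<in> block_orbit v b then h (orbit_index v b c mod 3) else 0)
        + (if short_block v c then 1 else 0)
        + (if P c then alternating_sign (min_dists P) (min_dist v c) else 0)" for c
      using block_orbit_not_short[OF block_subset[OF b(1)] b(3)] by (simp add: f_def P_def)
    then have "(\<Sum>c\<in>{c\<in>B. x \<in> c}. f c) =
        (\<Sum>c\<in>{c\<in>B. x \<in> c}. if c \<in> block_orbit v b then h (orbit_index v b c mod 3) else 0)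
        + (\<Sum>c\<in>{c\<in>B. x \<in> c}. if short_block v c then 1 else 0)
        + (\<Sum>c\<in>{c\<in>B. x \<in> c}. if P c then alternating_sign (min_dists P) (min_dist v c) else 0)"
      by (simp add: sum.distrib)
    also have "\<dots> = (h 0 + h 1 + h 2) + 1 + 3 * S"
      using point_sum_orbit[OF b(1,3) x, of "\<lambda>k. h (k mod 3)"]
        sum_diff_mod_residues[OF three_dvd_v x block_subset[OF b(1)] card_block[OF b(1)] b(2)]
        point_sum_short[OF x] point_sum_min_dists[OF inv P_not_short x]
      by (simp add: S_def)
    finally show ?thesis by (simp add: h_def)
  qed
  ultimately have "zero_sum_flow 3 v B f" by (simp add: zero_sum_flow_def)
  then show ?thesis by (auto simp: admits_zero_sum_flow_def)
qed

end

theorem mainTheorem6: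
  fixes v :: nat and B :: "nat set set"
  assumes "v mod 18 = 3 \<or> v mod 18 = 15"
    and "v > 3"
    and "is_cyclic_STS v B"
  shows "admits_zero_sum_flow 4 v B \<and>
         ((\<exists>Orb. full_orbit v B Orb \<and> (orbit_of_type 1 Orb \<or> orbit_of_type 3 Orb))
           \<longrightarrow> admits_zero_sum_flow 3 v B)"
proof -
  \<comment> \<open>Only v = 3 (mod 6) is needed.\<close>
  have "v mod 6 = 3" using assms(1) by presburger
  then interpret cyclic_sts v B using assms(3) by unfold_locales
  have "admits_zero_sum_flow 3 v B"
    if full: "full_orbit v B Orb" and of_type: "orbit_of_type 1 Orb \<or> orbit_of_type 3 Orb" for Orb
  proof -
    obtain b where b: "b \<in> B" "Orb = block_orbit v b" "card Orb = v"
      using full unfolding full_orbit_def by blast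
    have "b \<in> Orb" using b image_shift_mult[OF block_subset[OF b(1)], of 0] v_pos
      by (force simp: block_orbit_def)
    then have "residue_count b = 1 \<or> residue_count b = 3"
      using of_type by (auto simp: orbit_of_type_def residue_count_def)
    then obtain b3 where "b3 \<in> B" "residue_count b3 = 3" "\<not> short_block v b3"
      using type_3_block_not_short b full_orbit_not_short by blast
    then show ?thesis by (rule zero_sum_flow_3)
  qed
  then show ?thesis using zero_sum_flow_4[OF assms(2)] by blast
qed

end
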